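(* Let $\mathcal{H}$ be an effective ample second countable Hausdorff groupoid with $\mathcal{H}^{(0)}$ a locally compact Cantor space. Then $\mathcal{H}$ embeds into $\mathcal{G}_{E_2}$ if and only if $\mathcal{H}\times\mathcal{R}$ embeds into $\mathcal{G}_{E_2}$.
   Context: "Embeds" means there is an injective étale homomorphism (groupoid homomorphism that is a local homeomorphism). Ample: étale with unit space Hausdorff with a basis of compact open sets; effective: interior of the isotropy $\{g:s(g)=r(g)\}$ equals the unit space. A locally compact Cantor space is a non-empty second countable Hausdorff space with a basis of compact open sets and no isolated points. $\mathcal{R}=\mathbb{N}\times\mathbb{N}$ with the discrete topology, $(k,m)(m,n)=(k,n)$, $(m,n)^{-1}=(n,m)$; $\mathcal{H}\times\mathcal{R}$ is the product groupoid. $E_2$ is the graph with one vertex $v$ and two loops $a,b$; $E_2^\infty$ is the space of infinite words in $\{a,b\}$ with the cylinder topology, $\sigma$ the shift, and $\mathcal{G}_{E_2}=\{(x,m-n,y):x,y\in E_2^\infty, m,n\ge0,\sigma^m(x)=\sigma^n(y)\}$ with $(x,k,y)(y,l,z)=(x,k+l,z)$, $(x,k,y)^{-1}=(y,-k,x)$, topology generated by $\{(x,m-n,y):x\in U,y\in V,\sigma^m(x)=\sigma^n(y)\}$ for open $U,V$ on which $\sigma^m,\sigma^n$ are injective with $\sigma^m(U)=\sigma^n(V)$. *)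

theory Defs
  imports "HOL-Analysis.Analysis"
begin

text \<open>Composition cmp g h is meant to be g h,
  defined when dom g = cod h (i.e. s(g) = r(h)). dom = source map s,
  cod = range map r; both map arrows to units (identity arrows).\<close>

record 'a tgpd =
  arr :: "'a set"
  dom :: "'a \<Rightarrow> 'a"
  cod :: "'a \<Rightarrow> 'a"
  cmp :: "'a \<Rightarrow> 'a \<Rightarrow> 'a"
  iv  :: "'a \<Rightarrow> 'a"
  gtop :: "'a topology"

definition units :: "('a, 'b) tgpd_scheme \<Rightarrow> 'a set" where
  "units G = dom G ` arr G"

definition composable :: "('a, 'b) tgpd_scheme \<Rightarrow> ('a \<times> 'a) set" where
  "composable G = {(g, h). g \<in> arr G \<and> h \<in> arr G \<and> dom G g = cod G h}"

definition is_groupoid :: "('a, 'b) tgpd_scheme \<Rightarrow> bool" where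
  "is_groupoid G \<longleftrightarrow>
     (\<forall>g\<in>arr G. dom G g \<in> arr G \<and> cod G g \<in> arr G \<and> iv G g \<in> arr G) \<and>
     (\<forall>g\<in>arr G. dom G (dom G g) = dom G g \<and> cod G (dom G g) = dom G g \<and>
                 dom G (cod G g) = cod G g \<and> cod G (cod G g) = cod G g) \<and>
     (\<forall>(g, h)\<in>composable G. cmp G g h \<in> arr G \<and>
          dom G (cmp G g h) = dom G h \<and> cod G (cmp G g h) = cod G g) \<and>
     (\<forall>g\<in>arr G. \<forall>h\<in>arr G. \<forall>k\<in>arr G. dom G g = cod G h \<and> dom G h = cod G k \<longrightarrow>
          cmp G (cmp G g h) k = cmp G g (cmp G h k)) \<and>
     (\<forall>g\<in>arr G. cmp G (cod G g) g = g \<and> cmp G g (dom G g) = g) \<and>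
     (\<forall>g\<in>arr G. dom G (iv G g) = cod G g \<and> cod G (iv G g) = dom G g \<and>
          cmp G (iv G g) g = dom G g \<and> cmp G g (iv G g) = cod G g)"

definition is_tgroupoid :: "('a, 'b) tgpd_scheme \<Rightarrow> bool" where
  "is_tgroupoid G \<longleftrightarrow> is_groupoid G \<and> topspace (gtop G) = arr G \<and>
     continuous_map (subtopology (prod_topology (gtop G) (gtop G)) (composable G)) (gtop G)
        (\<lambda>(g, h). cmp G g h) \<and>
     continuous_map (gtop G) (gtop G) (iv G)"

definition local_homeo :: "'a topology \<Rightarrow> 'b topology \<Rightarrow> ('a \<Rightarrow> 'b) \<Rightarrow> bool" where
  "local_homeo X Y f \<longleftrightarrow> continuous_map X Y f \<and>
     (\<forall>x\<in>topspace X. \<exists>U. openin X U \<and> x \<in> U \<and> openin Y (f ` U) \<and>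
        homeomorphic_map (subtopology X U) (subtopology Y (f ` U)) f)"

definition etale :: "('a, 'b) tgpd_scheme \<Rightarrow> bool" where
  "etale G \<longleftrightarrow> is_tgroupoid G \<and> local_homeo (gtop G) (gtop G) (cod G)"

definition has_compact_open_basis :: "'a topology \<Rightarrow> bool" where
  "has_compact_open_basis X \<longleftrightarrow>
     (\<forall>U x. openin X U \<and> x \<in> U \<longrightarrow> (\<exists>K. openin X K \<and> compactin X K \<and> x \<in> K \<and> K \<subseteq> U))"

definition ample :: "('a, 'b) tgpd_scheme \<Rightarrow> bool" where
  "ample G \<longleftrightarrow> etale G \<and> Hausdorff_space (subtopology (gtop G) (units G)) \<and>
     has_compact_open_basis (subtopology (gtop G) (units G))"

definition isotropy :: "('a, 'b) tgpd_scheme \<Rightarrow> 'a set" where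
  "isotropy G = {g \<in> arr G. dom G g = cod G g}"

definition effective :: "('a, 'b) tgpd_scheme \<Rightarrow> bool" where
  "effective G \<longleftrightarrow> (gtop G) interior_of (isotropy G) = units G"

definition lc_cantor :: "'a topology \<Rightarrow> bool" where
  "lc_cantor X \<longleftrightarrow> topspace X \<noteq> {} \<and> second_countable X \<and> Hausdorff_space X \<and>
     has_compact_open_basis X \<and> (\<nexists>x. openin X {x})"

definition gpd_hom :: "('a, 'c) tgpd_scheme \<Rightarrow> ('b, 'd) tgpd_scheme \<Rightarrow> ('a \<Rightarrow> 'b) \<Rightarrow> bool" where
  "gpd_hom G H f \<longleftrightarrow> f ` arr G \<subseteq> arr H \<and>
     (\<forall>(g, h)\<in>composable G. dom H (f g) = cod H (f h) \<and> f (cmp G g h) = cmp H (f g) (f h))"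

definition embeds :: "('a, 'c) tgpd_scheme \<Rightarrow> ('b, 'd) tgpd_scheme \<Rightarrow> bool" where
  "embeds G H \<longleftrightarrow> (\<exists>f. gpd_hom G H f \<and> inj_on f (arr G) \<and> local_homeo (gtop G) (gtop H) f)"

section \<open>The product with the full equivalence relation on N\<close>

definition prodR :: "('a, 'c) tgpd_scheme \<Rightarrow> ('a \<times> (nat \<times> nat)) tgpd" where
  "prodR G = \<lparr> arr = arr G \<times> UNIV,
     dom = (\<lambda>(g, (k, m)). (dom G g, (m, m))),
     cod = (\<lambda>(g, (k, m)). (cod G g, (k, k))),
     cmp = (\<lambda>(g, (k, m)) (h, (m', n)). (cmp G g h, (k, n))),
     iv = (\<lambda>(g, (k, m)). (iv G g, (m, k))),
     gtop = prod_topology (gtop G) (discrete_topology UNIV) \<rparr>"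

text \<open>Infinite words in {a,b}, encoded as nat \<Rightarrow> bool (False = a, True = b),
  with the cylinder (product of discrete) topology.\<close>

type_synonym word = "nat \<Rightarrow> bool"

definition cantor_top :: "word topology" where
  "cantor_top = product_topology (\<lambda>_. discrete_topology UNIV) UNIV"

definition shift :: "nat \<Rightarrow> word \<Rightarrow> word" where
  "shift m x = (\<lambda>n. x (n + m))"

definition GE2_basic :: "(word \<times> int \<times> word) set set" where
  "GE2_basic = {{(x, int m - int n, y) | x y. x \<in> U \<and> y \<in> V \<and> shift m x = shift n y}
      | U V m n. openin cantor_top U \<and> openin cantor_top V \<and>
          inj_on (shift m) U \<and> inj_on (shift n) V \<and> shift m ` U = shift n ` V}"

definition GE2 :: "(word \<times> int \<times> word) tgpd" where
  "GE2 = \<lparr> arr = {(x, int m - int n, y) | x y m n. shift m x = shift n y},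
     dom = (\<lambda>(x, k, y). (y, 0, y)),
     cod = (\<lambda>(x, k, y). (x, 0, x)),
     cmp = (\<lambda>(x, k, y) (y', l, z). (x, k + l, z)),
     iv = (\<lambda>(x, k, y). (y, - k, x)),
     gtop = topology_generated_by GE2_basic \<rparr>"

end

theory Submission
  imports Defs
begin

(* Both directions are explicit constructions.
   H embeds into H \<times> R as the open slice of arrows (g, (0, 0)), so an embedding of H \<times> R
   restricts to one of H. Conversely, given an embedding f of H, send (h, (m, n)) to
   corner m n (f h), where corner m n (x, k, y) = (a^m b x, k + m - n, a^n b y). Since the
   words a^m b are pairwise incomparable, the corners have pairwise disjoint images and together
   form an injective homomorphism on H \<times> R; and each corner maps the basic open bisection
   Z(\<mu>, \<nu>) onto Z(a^m b \<mu>, a^n b \<nu>), hence is a homeomorphism of G_E2 onto an open subset. *)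

lemma homeomorphic_map_restrict_open:
  assumes U: "openin X U" and fU: "openin Y (f ` U)"
    and hom: "homeomorphic_map (subtopology X U) (subtopology Y (f ` U)) f"
    and W: "openin X W" "W \<subseteq> U"
  shows "openin Y (f ` W) \<and> homeomorphic_map (subtopology X W) (subtopology Y (f ` W)) f"
proof
  have "openin (subtopology X U) W"
    using W openin_open_subtopology[OF U] by simp
  then have "openin (subtopology Y (f ` U)) (f ` W)"
    using homeomorphic_map_openness[OF hom] W U by (simp add: openin_subset Int_absorb1)
  then show "openin Y (f ` W)"
    using fU by (rule openin_trans_full)
  have "homeomorphic_map (subtopology (subtopology X U) W)
          (subtopology (subtopology Y (f ` U)) (f ` W)) f"
  proof (rule homeomorphic_map_subtopologies[OF hom])
    show "f ` (topspace (subtopology X U) \<inter> W) = topspace (subtopology Y (f ` U)) \<inter> f ` W"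
      using W(2) openin_subset[OF U] openin_subset[OF fU] by (auto simp: Int_absorb1)
  qed
  then show "homeomorphic_map (subtopology X W) (subtopology Y (f ` W)) f"
    using W by (simp add: subtopology_subtopology Int_absorb1 image_mono)
qed

lemma local_homeoI:
  assumes loc: "\<And>x. x \<in> topspace X \<Longrightarrow> \<exists>U. openin X U \<and> x \<in> U \<and> openin Y (f ` U) \<and>
        homeomorphic_map (subtopology X U) (subtopology Y (f ` U)) f"
  shows "local_homeo X Y f"
proof -
  have "continuous_map X Y f"
  proof (rule pasting_lemma[where I = "{U. openin X U \<and> continuous_map (subtopology X U) Y f}"
        and T = id and f = "\<lambda>_. f"])
    fix x assume "x \<in> topspace X"
    with loc obtain U where "openin X U" "x \<in> U"
      and "homeomorphic_map (subtopology X U) (subtopology Y (f ` U)) f" by blast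
    then show "\<exists>U. U \<in> {U. openin X U \<and> continuous_map (subtopology X U) Y f} \<and> x \<in> id U \<and> f x = f x"
      by (metis (mono_tags, lifting) continuous_map_in_subtopology homeomorphic_imp_continuous_map id_apply mem_Collect_eq)
  qed auto
  with loc show ?thesis
    unfolding local_homeo_def by blast
qed

lemma local_homeoE:
  assumes "local_homeo X Y f" "x \<in> topspace X"
  obtains U where "openin X U" "x \<in> U" "openin Y (f ` U)"
    "homeomorphic_map (subtopology X U) (subtopology Y (f ` U)) f"
  using assms unfolding local_homeo_def by blast

lemma local_homeo_compose:
  assumes f: "local_homeo X Y f" and g: "local_homeo Y Z g"
  shows "local_homeo X Z (g \<circ> f)"
proof (rule local_homeoI)
  fix x assume x: "x \<in> topspace X"
  have cf: "continuous_map X Y f"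
    using f unfolding local_homeo_def by blast
  obtain U where U: "openin X U" "x \<in> U" "openin Y (f ` U)"
    "homeomorphic_map (subtopology X U) (subtopology Y (f ` U)) f"
    using local_homeoE[OF f x] by blast
  have fx: "f x \<in> topspace Y"
    using continuous_map_image_subset_topspace[OF cf] x by blast
  obtain V where V: "openin Y V" "f x \<in> V" "openin Z (g ` V)"
    "homeomorphic_map (subtopology Y V) (subtopology Z (g ` V)) g"
    using local_homeoE[OF g fx] by blast
  define W where "W = U \<inter> {z \<in> topspace X. f z \<in> V}"
  have W: "openin X W" "x \<in> W" "W \<subseteq> U"
    using U V x cf by (auto simp: W_def continuous_map openin_Int)
  have fW: "openin Y (f ` W) \<and> homeomorphic_map (subtopology X W) (subtopology Y (f ` W)) f"
    using homeomorphic_map_restrict_open[OF U(1,3,4) W(1,3)] .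
  moreover have "openin Z (g ` f ` W) \<and>
      homeomorphic_map (subtopology Y (f ` W)) (subtopology Z (g ` f ` W)) g"
    using fW by (intro homeomorphic_map_restrict_open[OF V(1,3,4)]) (auto simp: W_def)
  ultimately show "\<exists>W. openin X W \<and> x \<in> W \<and> openin Z ((g \<circ> f) ` W) \<and>
      homeomorphic_map (subtopology X W) (subtopology Z ((g \<circ> f) ` W)) (g \<circ> f)"
    using W by (metis homeomorphic_map_compose image_comp)
qed

lemma local_homeo_of_open_inj:
  assumes "continuous_map X Y f" "open_map X Y f" "inj_on f (topspace X)"
  shows "local_homeo X Y f"
proof (rule local_homeoI)
  fix x assume "x \<in> topspace X"
  moreover have "openin Y (f ` topspace X)"
    using assms(2) unfolding open_map_def by blast
  moreover have "homeomorphic_map X (subtopology Y (f ` topspace X)) f"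
    using assms by (intro bijective_open_imp_homeomorphic_map)
      (auto simp: continuous_map_in_subtopology open_map_into_subtopology
        dest: continuous_map_image_subset_topspace)
  ultimately show "\<exists>U. openin X U \<and> x \<in> U \<and> openin Y (f ` U) \<and>
      homeomorphic_map (subtopology X U) (subtopology Y (f ` U)) f"
    by (metis openin_topspace subtopology_topspace)
qed

lemma homeomorphic_maps_slice:
  assumes "b \<in> topspace Y"
  shows "homeomorphic_maps (subtopology X U) (subtopology (prod_topology X Y) (U \<times> {b}))
           (\<lambda>x. (x, b)) fst"
  unfolding homeomorphic_maps_def
proof (intro conjI)
  show "continuous_map (subtopology X U) (subtopology (prod_topology X Y) (U \<times> {b})) (\<lambda>x. (x, b))"
    unfolding continuous_map_in_subtopology
    using assms by (auto simp: continuous_map_pairedI continuous_map_from_subtopology)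
  show "continuous_map (subtopology (prod_topology X Y) (U \<times> {b})) (subtopology X U) fst"
    unfolding continuous_map_in_subtopology
    by (auto intro: continuous_map_from_subtopology continuous_map_fst)
qed auto

lemma local_homeo_slice_inclusion:
  assumes "b \<in> S"
  shows "local_homeo X (prod_topology X (discrete_topology S)) (\<lambda>x. (x, b))"
proof (rule local_homeo_of_open_inj)
  show "continuous_map X (prod_topology X (discrete_topology S)) (\<lambda>x. (x, b))"
    using assms by (simp add: continuous_map_pairedI)
  show "open_map X (prod_topology X (discrete_topology S)) (\<lambda>x. (x, b))"
    unfolding open_map_def
  proof (intro allI impI)
    fix U assume "openin X U"
    moreover have "(\<lambda>x. (x, b)) ` U = U \<times> {b}"
      by auto
    ultimately show "openin (prod_topology X (discrete_topology S)) ((\<lambda>x. (x, b)) ` U)"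
      using assms by (simp add: openin_prod_Times_iff)
  qed
qed (simp add: inj_on_def)

lemma local_homeo_prod_discrete:
  assumes slices: "\<And>d. d \<in> S \<Longrightarrow> local_homeo X Y (\<lambda>x. F (x, d))"
  shows "local_homeo (prod_topology X (discrete_topology S)) Y F"
proof (rule local_homeoI)
  let ?P = "prod_topology X (discrete_topology S)"
  fix z assume "z \<in> topspace ?P"
  then obtain x d where z: "z = (x, d)" and x: "x \<in> topspace X" and d: "d \<in> S"
    by (cases z) auto
  obtain U where U: "openin X U" "x \<in> U" "openin Y ((\<lambda>x. F (x, d)) ` U)"
    "homeomorphic_map (subtopology X U) (subtopology Y ((\<lambda>x. F (x, d)) ` U)) (\<lambda>x. F (x, d))"
    using local_homeoE[OF slices[OF d] x] by blast
  have image: "F ` (U \<times> {d}) = (\<lambda>x. F (x, d)) ` U"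
    by force
  have "homeomorphic_map (subtopology ?P (U \<times> {d})) (subtopology X U) fst"
    using homeomorphic_maps_slice[of d "discrete_topology S" X U] d
    by (simp add: homeomorphic_maps_map)
  then have "homeomorphic_map (subtopology ?P (U \<times> {d})) (subtopology Y (F ` (U \<times> {d}))) F"
    unfolding image
    by (rule homeomorphic_map_eq[OF homeomorphic_map_compose[OF _ U(4)]]) auto
  moreover have "openin ?P (U \<times> {d})"
    using U(1) d by (simp add: openin_prod_Times_iff)
  ultimately show "\<exists>W. openin ?P W \<and> z \<in> W \<and> openin Y (F ` W) \<and>
      homeomorphic_map (subtopology ?P W) (subtopology Y (F ` W)) F"
    using U(2,3) z image by (intro exI[of _ "U \<times> {d}"]) simp
qed

section \<open>Cylinders and the topology of G_E2\<close>

definition cyl :: "word \<Rightarrow> nat \<Rightarrow> word set" where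
  "cyl x N = {z. \<forall>i<N. z i = x i}"

lemma self_in_cyl [simp]: "x \<in> cyl x N"
  by (simp add: cyl_def)

lemma cyl_antimono: "M \<le> N \<Longrightarrow> cyl x N \<subseteq> cyl x M"
  by (auto simp: cyl_def)

lemma openin_cantor_top: "openin cantor_top U \<longleftrightarrow> (\<forall>x\<in>U. \<exists>N. cyl x N \<subseteq> U)"
proof
  assume "openin cantor_top U"
  show "\<forall>x\<in>U. \<exists>N. cyl x N \<subseteq> U"
  proof
    fix x assume "x \<in> U"
    then obtain V where fin: "finite {i. V i \<noteq> UNIV}" and x: "x \<in> PiE UNIV V"
      and sub: "PiE UNIV V \<subseteq> U"
      using \<open>openin cantor_top U\<close> unfolding cantor_top_def openin_product_topology_alt by auto
    obtain N where N: "{i. V i \<noteq> UNIV} \<subseteq> {..<N}"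
      using finite_nat_bounded[OF fin] by blast
    have "cyl x N \<subseteq> PiE UNIV V"
    proof
      fix z assume z: "z \<in> cyl x N"
      have "z i \<in> V i" for i
      proof (cases "i < N")
        case True
        with z x show ?thesis by (auto simp: cyl_def PiE_iff)
      next
        case False
        with N show ?thesis by auto
      qed
      then show "z \<in> PiE UNIV V" by (simp add: PiE_iff)
    qed
    with sub show "\<exists>N. cyl x N \<subseteq> U" by blast
  qed
next
  assume cyls: "\<forall>x\<in>U. \<exists>N. cyl x N \<subseteq> U"
  show "openin cantor_top U"
    unfolding cantor_top_def openin_product_topology_alt
  proof
    fix x assume "x \<in> U"
    then obtain N where N: "cyl x N \<subseteq> U" using cyls by blast
    define V where "V i = {b. i < N \<longrightarrow> b = x i}" for i
    have "finite {i. V i \<noteq> UNIV}"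
      by (rule finite_subset[of _ "{..<N}"]) (auto simp: V_def)
    moreover have "PiE UNIV V = cyl x N"
      by (auto simp: V_def PiE_iff cyl_def)
    ultimately show "\<exists>V. finite {i \<in> UNIV. V i \<noteq> topspace (discrete_topology UNIV)} \<and>
        (\<forall>i\<in>UNIV. openin (discrete_topology UNIV) (V i)) \<and> x \<in> Pi\<^sub>E UNIV V \<and> Pi\<^sub>E UNIV V \<subseteq> U"
      using N by (intro exI[of _ V]) auto
  qed
qed

lemma openin_cyl: "openin cantor_top (cyl x N)"
  unfolding openin_cantor_top by (auto simp: cyl_def intro!: exI[of _ N])

lemma shift_shift: "shift p (shift q x) = shift (p + q) x"
  by (simp add: shift_def add.assoc)

lemma shift_eq_shift_add: "shift p x = shift q y \<Longrightarrow> shift (p + j) x = shift (q + j) y"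
  by (metis add.commute shift_shift)

lemma inj_on_shift_cyl: "inj_on (shift p) (cyl x (p + N))"
proof (rule inj_onI)
  fix a b assume "a \<in> cyl x (p + N)" "b \<in> cyl x (p + N)" "shift p a = shift p b"
  then have "a i = b i" for i
    by (cases "i < p") (auto simp: cyl_def shift_def fun_eq_iff dest: spec[of _ "i - p"])
  then show "a = b" ..
qed

lemma shift_image_cyl: "shift p ` cyl x (p + N) = cyl (shift p x) N"
proof
  show "shift p ` cyl x (p + N) \<subseteq> cyl (shift p x) N"
    by (auto simp: cyl_def shift_def)
  show "cyl (shift p x) N \<subseteq> shift p ` cyl x (p + N)"
  proof
    fix w assume w: "w \<in> cyl (shift p x) N"
    define z where "z i = (if i < p then x i else w (i - p))" for i
    have "shift p z = w" by (simp add: z_def shift_def)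
    moreover have "z \<in> cyl x (p + N)"
      using w by (auto simp: z_def cyl_def shift_def dest: spec[of _ "_ - p"])
    ultimately show "w \<in> shift p ` cyl x (p + N)" by blast
  qed
qed

(* If shift p x = shift q y, this is the basic bisection Z(\<mu>, \<nu>) of the graph groupoid,
   where \<mu> and \<nu> are the first p + N letters of x and the first q + N letters of y. *)
definition zcyl :: "nat \<Rightarrow> nat \<Rightarrow> nat \<Rightarrow> word \<Rightarrow> word \<Rightarrow> (word \<times> int \<times> word) set" where
  "zcyl p q N x y = {(x', int p - int q, y') | x' y'.
     x' \<in> cyl x (p + N) \<and> y' \<in> cyl y (q + N) \<and> shift p x' = shift q y'}"

lemma self_in_zcyl_iff: "(x, k, y) \<in> zcyl p q N x y \<longleftrightarrow> k = int p - int q \<and> shift p x = shift q y"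
  by (auto simp: zcyl_def)

lemma zcyl_subset_arr: "zcyl p q N x y \<subseteq> arr GE2"
  by (auto simp: zcyl_def GE2_def)

lemma zcyl_antimono: "N \<le> N' \<Longrightarrow> zcyl p q N' x y \<subseteq> zcyl p q N x y"
  using cyl_antimono[of "p + N" "p + N'" x] cyl_antimono[of "q + N" "q + N'" y]
  unfolding zcyl_def by auto

lemma zcyl_add_subset:
  assumes xy: "shift p x = shift q y"
  shows "zcyl (p + j) (q + j) N x y \<subseteq> zcyl p q N x y"
proof
  fix z assume "z \<in> zcyl (p + j) (q + j) N x y"
  then obtain x' y' where z: "z = (x', int (p + j) - int (q + j), y')"
    and x': "x' \<in> cyl x (p + j + N)" and y': "y' \<in> cyl y (q + j + N)"
    and xy': "shift (p + j) x' = shift (q + j) y'"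
    by (auto simp: zcyl_def)
  have "x' (i + p) = y' (i + q)" for i
  proof (cases "i < j")
    case True
    then have "x' (i + p) = x (i + p)" "y' (i + q) = y (i + q)"
      using x' y' by (auto simp: cyl_def)
    moreover have "x (i + p) = y (i + q)"
      using fun_cong[OF xy, of i] by (simp add: shift_def)
    ultimately show ?thesis by simp
  next
    case False
    then have "i - j + (p + j) = i + p" "i - j + (q + j) = i + q"
      by simp_all
    then show ?thesis
      using fun_cong[OF xy', of "i - j"] by (simp add: shift_def)
  qed
  then have "shift p x' = shift q y'"
    by (simp add: shift_def)
  moreover have "x' \<in> cyl x (p + N)" "y' \<in> cyl y (q + N)"
    using x' y' cyl_antimono[of "p + N" "p + j + N" x] cyl_antimono[of "q + N" "q + j + N" y] by auto
  ultimately show "z \<in> zcyl p q N x y"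
    unfolding z zcyl_def by auto
qed

lemma zcyl_in_GE2_basic:
  assumes "shift p x = shift q y"
  shows "zcyl p q N x y \<in> GE2_basic"
proof -
  have "shift p ` cyl x (p + N) = shift q ` cyl y (q + N)"
    using assms by (simp add: shift_image_cyl)
  then show ?thesis
    unfolding GE2_basic_def zcyl_def
    by (intro CollectI exI[of _ "cyl x (p + N)"] exI[of _ "cyl y (q + N)"] exI[of _ p] exI[of _ q])
      (simp add: openin_cyl inj_on_shift_cyl)
qed

definition cylinder_open :: "(word \<times> int \<times> word) set \<Rightarrow> bool" where
  "cylinder_open S \<longleftrightarrow> (\<forall>(x, k, y)\<in>S. \<exists>p q N. (x, k, y) \<in> zcyl p q N x y \<and> zcyl p q N x y \<subseteq> S)"

lemma cylinder_openI:
  assumes "\<And>x k y. (x, k, y) \<in> S \<Longrightarrow> \<exists>p q N. (x, k, y) \<in> zcyl p q N x y \<and> zcyl p q N x y \<subseteq> S"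
  shows "cylinder_open S"
  using assms unfolding cylinder_open_def by blast

lemma cylinder_openD:
  assumes "cylinder_open S" "(x, k, y) \<in> S"
  obtains p q N where "(x, k, y) \<in> zcyl p q N x y" "zcyl p q N x y \<subseteq> S"
  using assms unfolding cylinder_open_def by blast

lemma cylinder_open_GE2_basic:
  assumes "B \<in> GE2_basic"
  shows "cylinder_open B"
proof (rule cylinder_openI)
  obtain U V m n where B: "B = {(x, int m - int n, y) | x y. x \<in> U \<and> y \<in> V \<and> shift m x = shift n y}"
    and U: "openin cantor_top U" and V: "openin cantor_top V"
    using assms unfolding GE2_basic_def by blast
  fix x k y assume "(x, k, y) \<in> B"
  then have x: "x \<in> U" and y: "y \<in> V" and k: "k = int m - int n" and xy: "shift m x = shift n y"
    using B by auto
  obtain Nx Ny where Nx: "cyl x Nx \<subseteq> U" and Ny: "cyl y Ny \<subseteq> V"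
    using U V x y unfolding openin_cantor_top by blast
  have "cyl x (m + (Nx + Ny)) \<subseteq> U" "cyl y (n + (Nx + Ny)) \<subseteq> V"
    using Nx Ny cyl_antimono[of Nx "m + (Nx + Ny)" x] cyl_antimono[of Ny "n + (Nx + Ny)" y] by auto
  then have "zcyl m n (Nx + Ny) x y \<subseteq> B"
    unfolding B zcyl_def by blast
  moreover have "(x, k, y) \<in> zcyl m n (Nx + Ny) x y"
    using k xy by (simp add: self_in_zcyl_iff)
  ultimately show "\<exists>p q N. (x, k, y) \<in> zcyl p q N x y \<and> zcyl p q N x y \<subseteq> B"
    by blast
qed

lemma zcyl_Int_zcyl:
  assumes "(x, k, y) \<in> zcyl p1 q1 N1 x y" "(x, k, y) \<in> zcyl p2 q2 N2 x y"
  shows "\<exists>p q N. (x, k, y) \<in> zcyl p q N x y \<and> zcyl p q N x y \<subseteq> zcyl p1 q1 N1 x y \<inter> zcyl p2 q2 N2 x y"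
proof -
  have refine: "\<exists>p q N. (x, k, y) \<in> zcyl p q N x y \<and> zcyl p q N x y \<subseteq> zcyl p1 q1 N1 x y \<inter> zcyl p2 q2 N2 x y"
    if "(x, k, y) \<in> zcyl p1 q1 N1 x y" "(x, k, y) \<in> zcyl p2 q2 N2 x y" "p1 \<le> p2"
    for p1 q1 N1 p2 q2 N2
  proof (intro exI conjI)
    define j where "j = p2 - p1"
    have p2: "p2 = p1 + j" and q2: "q2 = q1 + j"
      using that by (auto simp: j_def self_in_zcyl_iff)
    show "(x, k, y) \<in> zcyl p2 q2 (N1 + N2) x y"
      using that(2) by (simp add: self_in_zcyl_iff)
    have "zcyl p2 q2 (N1 + N2) x y \<subseteq> zcyl p1 q1 (N1 + N2) x y"
      unfolding p2 q2 using that(1) by (intro zcyl_add_subset) (simp add: self_in_zcyl_iff)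
    then show "zcyl p2 q2 (N1 + N2) x y \<subseteq> zcyl p1 q1 N1 x y \<inter> zcyl p2 q2 N2 x y"
      using zcyl_antimono[of N1 "N1 + N2" p1 q1 x y] zcyl_antimono[of N2 "N1 + N2" p2 q2 x y] by auto
  qed
  show ?thesis
  proof (cases "p1 \<le> p2")
    case True
    then show ?thesis using refine[OF assms] by blast
  next
    case False
    then show ?thesis using refine[OF assms(2,1)] by (simp add: Int_commute)
  qed
qed

lemma cylinder_open_Int:
  assumes "cylinder_open A" "cylinder_open B"
  shows "cylinder_open (A \<inter> B)"
proof (rule cylinder_openI)
  fix x k y assume "(x, k, y) \<in> A \<inter> B"
  then obtain p1 q1 N1 p2 q2 N2 where
    A: "(x, k, y) \<in> zcyl p1 q1 N1 x y" "zcyl p1 q1 N1 x y \<subseteq> A" and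
    B: "(x, k, y) \<in> zcyl p2 q2 N2 x y" "zcyl p2 q2 N2 x y \<subseteq> B"
    using assms by (meson IntE cylinder_openD)
  then show "\<exists>p q N. (x, k, y) \<in> zcyl p q N x y \<and> zcyl p q N x y \<subseteq> A \<inter> B"
    using zcyl_Int_zcyl[OF A(1) B(1)] by blast
qed

lemma cylinder_open_Union: "(\<And>A. A \<in> K \<Longrightarrow> cylinder_open A) \<Longrightarrow> cylinder_open (\<Union>K)"
  unfolding cylinder_open_def by blast

lemma openin_GE2: "openin (gtop GE2) S \<longleftrightarrow> cylinder_open S"
proof
  assume "openin (gtop GE2) S"
  then have "generate_topology_on GE2_basic S"
    by (simp add: GE2_def openin_topology_generated_by_iff)
  then show "cylinder_open S"
  proof (induction rule: generate_topology_on.induct)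
    case Empty
    then show ?case by (simp add: cylinder_open_def)
  next
    case (Int a b)
    then show ?case by (simp add: cylinder_open_Int)
  next
    case (UN K)
    then show ?case by (simp add: cylinder_open_Union)
  next
    case (Basis s)
    then show ?case by (rule cylinder_open_GE2_basic)
  qed
next
  assume S: "cylinder_open S"
  show "openin (gtop GE2) S"
    unfolding openin_subopen[of _ S]
  proof
    fix z assume "z \<in> S"
    then obtain x k y where z: "z = (x, k, y)" "(x, k, y) \<in> S"
      by (cases z) auto
    obtain p q N where "(x, k, y) \<in> zcyl p q N x y" "zcyl p q N x y \<subseteq> S"
      using S z(2) by (rule cylinder_openD)
    moreover have "openin (gtop GE2) (zcyl p q N x y)"
      using calculation(1) unfolding GE2_def self_in_zcyl_iff
      by (simp add: topology_generated_by_Basis zcyl_in_GE2_basic)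
    ultimately show "\<exists>T. openin (gtop GE2) T \<and> z \<in> T \<and> T \<subseteq> S"
      using z by blast
  qed
qed

lemma cylinder_open_arr: "cylinder_open (arr GE2)"
proof (rule cylinder_openI)
  fix x k y assume "(x, k, y) \<in> arr GE2"
  then obtain m n where "k = int m - int n" "shift m x = shift n y"
    by (auto simp: GE2_def)
  then show "\<exists>p q N. (x, k, y) \<in> zcyl p q N x y \<and> zcyl p q N x y \<subseteq> arr GE2"
    using zcyl_subset_arr self_in_zcyl_iff by blast
qed

lemma topspace_GE2: "topspace (gtop GE2) = arr GE2"
proof
  have "cylinder_open (topspace (gtop GE2))"
    using openin_GE2 by blast
  then show "topspace (gtop GE2) \<subseteq> arr GE2"
    using zcyl_subset_arr by (fastforce simp: cylinder_open_def)
  show "arr GE2 \<subseteq> topspace (gtop GE2)"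
    using cylinder_open_arr openin_GE2 openin_subset by blast
qed

section \<open>Corner maps\<close>

(* The word a^m b x, with a = False and b = True as in the encoding of words. *)
definition prepend_ab :: "nat \<Rightarrow> word \<Rightarrow> word" where
  "prepend_ab m x = (\<lambda>i. if i < m then False else if i = m then True else x (i - Suc m))"

lemma shift_prepend_ab: "shift (p + Suc m) (prepend_ab m x) = shift p x"
  by (simp add: shift_def prepend_ab_def)

lemma shift_Suc_prepend_ab: "shift (Suc m) (prepend_ab m x) = x"
  by (simp add: shift_def prepend_ab_def)

lemma prepend_ab_eq_iff: "prepend_ab m x = prepend_ab m' x' \<longleftrightarrow> m = m' \<and> x = x'"
proof
  assume eq: "prepend_ab m x = prepend_ab m' x'"
  have "m = m'"
  proof (rule ccontr)
    assume "m \<noteq> m'"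
    then have "prepend_ab m x (min m m') \<noteq> prepend_ab m' x' (min m m')"
      by (auto simp: prepend_ab_def min_def)
    with eq show False by simp
  qed
  moreover have "x = x'"
    using arg_cong[OF eq, of "shift (Suc m)"] \<open>m = m'\<close> by (simp add: shift_Suc_prepend_ab)
  ultimately show "m = m' \<and> x = x'" ..
qed simp

lemma prepend_ab_shift_Suc:
  assumes "z \<in> cyl (prepend_ab m x) (Suc m)"
  shows "prepend_ab m (shift (Suc m) z) = z"
proof
  fix i
  show "prepend_ab m (shift (Suc m) z) i = z i"
    using assms by (cases "i < Suc m") (auto simp: cyl_def prepend_ab_def shift_def)
qed

lemma prepend_ab_in_cyl_iff: "prepend_ab m x' \<in> cyl (prepend_ab m x) (N + Suc m) \<longleftrightarrow> x' \<in> cyl x N"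
proof
  assume "prepend_ab m x' \<in> cyl (prepend_ab m x) (N + Suc m)"
  then have "prepend_ab m x' (i + Suc m) = prepend_ab m x (i + Suc m)" if "i < N" for i
    using that by (simp add: cyl_def)
  then show "x' \<in> cyl x N"
    by (simp add: cyl_def prepend_ab_def)
next
  assume "x' \<in> cyl x N"
  then show "prepend_ab m x' \<in> cyl (prepend_ab m x) (N + Suc m)"
    by (auto simp: cyl_def prepend_ab_def)
qed

definition corner :: "nat \<Rightarrow> nat \<Rightarrow> word \<times> int \<times> word \<Rightarrow> word \<times> int \<times> word" where
  "corner m n = (\<lambda>(x, k, y). (prepend_ab m x, k + int m - int n, prepend_ab n y))"

lemma corner_apply [simp]: "corner m n (x, k, y) = (prepend_ab m x, k + int m - int n, prepend_ab n y)"
  by (simp add: corner_def)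

lemma corner_eq_iff: "corner m n a = corner m' n' b \<longleftrightarrow> m = m' \<and> n = n' \<and> a = b"
  by (cases a, cases b) (auto simp: prepend_ab_eq_iff)

lemma dom_corner: "dom GE2 (corner m n a) = corner n n (dom GE2 a)"
  by (cases a) (simp add: GE2_def)

lemma cod_corner: "cod GE2 (corner m n a) = corner m m (cod GE2 a)"
  by (cases a) (simp add: GE2_def)

lemma cmp_corner: "cmp GE2 (corner k m a) (corner m n b) = corner k n (cmp GE2 a b)"
  by (cases a, cases b) (simp add: GE2_def)

lemma corner_image_zcyl:
  "corner m n ` zcyl p q N x y = zcyl (p + Suc m) (q + Suc n) N (prepend_ab m x) (prepend_ab n y)"
proof
  have len: "p + Suc m + N = (p + N) + Suc m" "q + Suc n + N = (q + N) + Suc n"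
    by simp_all
  show "corner m n ` zcyl p q N x y \<subseteq> zcyl (p + Suc m) (q + Suc n) N (prepend_ab m x) (prepend_ab n y)"
  proof
    fix z assume "z \<in> corner m n ` zcyl p q N x y"
    then obtain x' y' where z: "z = corner m n (x', int p - int q, y')"
      and x': "x' \<in> cyl x (p + N)" and y': "y' \<in> cyl y (q + N)" and xy': "shift p x' = shift q y'"
      by (auto simp: zcyl_def)
    have "prepend_ab m x' \<in> cyl (prepend_ab m x) (p + Suc m + N)"
      "prepend_ab n y' \<in> cyl (prepend_ab n y) (q + Suc n + N)"
      unfolding len prepend_ab_in_cyl_iff using x' y' by auto
    moreover have "shift (p + Suc m) (prepend_ab m x') = shift (q + Suc n) (prepend_ab n y')"
      unfolding shift_prepend_ab by (rule xy')
    ultimately show "z \<in> zcyl (p + Suc m) (q + Suc n) N (prepend_ab m x) (prepend_ab n y)"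
      unfolding z zcyl_def by force
  qed
  show "zcyl (p + Suc m) (q + Suc n) N (prepend_ab m x) (prepend_ab n y) \<subseteq> corner m n ` zcyl p q N x y"
  proof
    fix z assume "z \<in> zcyl (p + Suc m) (q + Suc n) N (prepend_ab m x) (prepend_ab n y)"
    then obtain x'' y'' where z: "z = (x'', int (p + Suc m) - int (q + Suc n), y'')"
      and x'': "x'' \<in> cyl (prepend_ab m x) (p + Suc m + N)"
      and y'': "y'' \<in> cyl (prepend_ab n y) (q + Suc n + N)"
      and xy'': "shift (p + Suc m) x'' = shift (q + Suc n) y''"
      by (auto simp: zcyl_def)
    define x' where "x' = shift (Suc m) x''"
    define y' where "y' = shift (Suc n) y''"
    have x''_eq: "x'' = prepend_ab m x'" and y''_eq: "y'' = prepend_ab n y'"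
      using x'' y'' cyl_antimono[of "Suc m" "p + Suc m + N"] cyl_antimono[of "Suc n" "q + Suc n + N"]
      unfolding x'_def y'_def by (auto intro!: prepend_ab_shift_Suc[symmetric])
    have "x' \<in> cyl x (p + N)" "y' \<in> cyl y (q + N)"
      using x'' y'' unfolding x''_eq y''_eq len prepend_ab_in_cyl_iff by auto
    moreover have "shift p x' = shift q y'"
      using xy'' by (simp add: x'_def y'_def shift_shift)
    ultimately have "(x', int p - int q, y') \<in> zcyl p q N x y"
      by (auto simp: zcyl_def)
    moreover have "z = corner m n (x', int p - int q, y')"
      using z x''_eq y''_eq by simp
    ultimately show "z \<in> corner m n ` zcyl p q N x y"
      by blast
  qed
qed

lemma corner_arr: "a \<in> arr GE2 \<Longrightarrow> corner m n a \<in> arr GE2"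
proof -
  assume "a \<in> arr GE2"
  then obtain x y p q where "a = (x, int p - int q, y)" and "shift p x = shift q y"
    by (auto simp: GE2_def)
  then have "a \<in> zcyl p q 0 x y"
    by (simp add: self_in_zcyl_iff)
  then show "corner m n a \<in> arr GE2"
    using corner_image_zcyl[of m n p q 0 x y] zcyl_subset_arr by blast
qed

lemma cylinder_open_corner_image:
  assumes "cylinder_open S"
  shows "cylinder_open (corner m n ` S)"
proof (rule cylinder_openI)
  fix x'' k'' y'' assume "(x'', k'', y'') \<in> corner m n ` S"
  then obtain x k y where S: "(x, k, y) \<in> S" and z: "(x'', k'', y'') = corner m n (x, k, y)"
    by auto
  obtain p q N where "(x, k, y) \<in> zcyl p q N x y" "zcyl p q N x y \<subseteq> S"
    using assms S by (rule cylinder_openD)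
  then have "(x'', k'', y'') \<in> corner m n ` zcyl p q N x y" "corner m n ` zcyl p q N x y \<subseteq> corner m n ` S"
    using z by (auto simp del: corner_apply)
  moreover have "x'' = prepend_ab m x" "y'' = prepend_ab n y"
    using z by simp_all
  ultimately show "\<exists>p q N. (x'', k'', y'') \<in> zcyl p q N x'' y'' \<and> zcyl p q N x'' y'' \<subseteq> corner m n ` S"
    unfolding corner_image_zcyl by blast
qed

lemma cylinder_open_corner_preimage:
  assumes "cylinder_open U"
  shows "cylinder_open {a \<in> arr GE2. corner m n a \<in> U}"
proof (rule cylinder_openI)
  fix x k y assume "(x, k, y) \<in> {a \<in> arr GE2. corner m n a \<in> U}"
  then have "corner m n (x, k, y) \<in> U" by simp
  then obtain P Q M where PQ: "corner m n (x, k, y) \<in> zcyl P Q M (prepend_ab m x) (prepend_ab n y)"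
    and U: "zcyl P Q M (prepend_ab m x) (prepend_ab n y) \<subseteq> U"
    using assms by (auto elim: cylinder_openD)
  define j where "j = Suc (m + n)"
  have k: "k = int (P + n) - int (Q + m)"
    and center: "shift P (prepend_ab m x) = shift Q (prepend_ab n y)"
    using PQ by (auto simp: self_in_zcyl_iff)
  have "shift (P + n + Suc m) (prepend_ab m x) = shift (Q + m + Suc n) (prepend_ab n y)"
    using shift_eq_shift_add[OF center, of j] by (simp add: j_def ac_simps)
  then have "shift (P + n) x = shift (Q + m) y"
    by (simp only: shift_prepend_ab)
  then have "(x, k, y) \<in> zcyl (P + n) (Q + m) M x y"
    using k by (simp add: self_in_zcyl_iff)
  moreover have "corner m n ` zcyl (P + n) (Q + m) M x y \<subseteq> U"
  proof -
    have "corner m n ` zcyl (P + n) (Q + m) M x y = zcyl (P + j) (Q + j) M (prepend_ab m x) (prepend_ab n y)"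
      by (simp add: corner_image_zcyl j_def ac_simps)
    also have "\<dots> \<subseteq> zcyl P Q M (prepend_ab m x) (prepend_ab n y)"
      using center by (rule zcyl_add_subset)
    finally show ?thesis
      using U by blast
  qed
  ultimately show "\<exists>p q N. (x, k, y) \<in> zcyl p q N x y \<and> zcyl p q N x y \<subseteq> {a \<in> arr GE2. corner m n a \<in> U}"
    using zcyl_subset_arr by blast
qed

lemma local_homeo_corner: "local_homeo (gtop GE2) (gtop GE2) (corner m n)"
proof (rule local_homeo_of_open_inj)
  show "continuous_map (gtop GE2) (gtop GE2) (corner m n)"
    unfolding continuous_map_def topspace_GE2
  proof (intro conjI allI impI)
    show "corner m n \<in> arr GE2 \<rightarrow> arr GE2"
      using corner_arr by blast
    fix U assume "openin (gtop GE2) U"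
    then show "openin (gtop GE2) {a \<in> arr GE2. corner m n a \<in> U}"
      by (simp add: openin_GE2 cylinder_open_corner_preimage)
  qed
  show "open_map (gtop GE2) (gtop GE2) (corner m n)"
    unfolding open_map_def openin_GE2 by (simp add: cylinder_open_corner_image)
  show "inj_on (corner m n) (topspace (gtop GE2))"
    by (simp add: inj_on_def corner_eq_iff)
qed

lemma gpd_hom_comp:
  assumes f: "gpd_hom G H f" and g: "gpd_hom H K g"
  shows "gpd_hom G K (g \<circ> f)"
  unfolding gpd_hom_def
proof (intro conjI)
  show "(g \<circ> f) ` arr G \<subseteq> arr K"
    using f g unfolding gpd_hom_def by (auto simp: image_subset_iff)
  show "\<forall>(a, b)\<in>composable G. dom K ((g \<circ> f) a) = cod K ((g \<circ> f) b) \<and>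
      (g \<circ> f) (cmp G a b) = cmp K ((g \<circ> f) a) ((g \<circ> f) b)"
  proof clarify
    fix a b assume "(a, b) \<in> composable G"
    then have "(f a, f b) \<in> composable H" "f (cmp G a b) = cmp H (f a) (f b)"
      using f unfolding gpd_hom_def composable_def by auto
    then show "dom K ((g \<circ> f) a) = cod K ((g \<circ> f) b) \<and>
        (g \<circ> f) (cmp G a b) = cmp K ((g \<circ> f) a) ((g \<circ> f) b)"
      using g unfolding gpd_hom_def by auto
  qed
qed

lemma embeds_trans:
  assumes "embeds G H" "embeds H K"
  shows "embeds G K"
proof -
  obtain f where f: "gpd_hom G H f" "inj_on f (arr G)" "local_homeo (gtop G) (gtop H) f"
    using assms(1) unfolding embeds_def by blast
  obtain g where g: "gpd_hom H K g" "inj_on g (arr H)" "local_homeo (gtop H) (gtop K) g"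
    using assms(2) unfolding embeds_def by blast
  have "inj_on (g \<circ> f) (arr G)"
    using f(1,2) g(2) unfolding gpd_hom_def by (blast intro: comp_inj_on inj_on_subset)
  then show ?thesis
    unfolding embeds_def using gpd_hom_comp[OF f(1) g(1)] local_homeo_compose[OF f(3) g(3)] by blast
qed

lemma embeds_prodR: "embeds H (prodR H)"
  unfolding embeds_def
proof (intro exI conjI)
  show "gpd_hom H (prodR H) (\<lambda>h. (h, (0, 0)))"
    by (auto simp: gpd_hom_def composable_def prodR_def)
  show "inj_on (\<lambda>h. (h, (0::nat, 0::nat))) (arr H)"
    by (simp add: inj_on_def)
  show "local_homeo (gtop H) (gtop (prodR H)) (\<lambda>h. (h, (0, 0)))"
    by (simp add: prodR_def local_homeo_slice_inclusion)
qed

lemma embeds_prodR_GE2: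
  assumes "embeds H GE2"
  shows "embeds (prodR H) GE2"
proof -
  obtain f where hom: "gpd_hom H GE2 f" and inj: "inj_on f (arr H)"
    and loc: "local_homeo (gtop H) (gtop GE2) f"
    using assms unfolding embeds_def by blast
  define F where "F = (\<lambda>(h, (m, n)). corner m n (f h))"
  have F_apply: "F (h, (m, n)) = corner m n (f h)" for h m n
    by (simp add: F_def)
  have hom_F: "gpd_hom (prodR H) GE2 F"
    unfolding gpd_hom_def
  proof (intro conjI)
    show "F ` arr (prodR H) \<subseteq> arr GE2"
      using hom by (auto simp: prodR_def gpd_hom_def F_apply corner_arr)
    show "\<forall>(a, b)\<in>composable (prodR H). dom GE2 (F a) = cod GE2 (F b) \<and>
        F (cmp (prodR H) a b) = cmp GE2 (F a) (F b)"
    proof clarify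
      fix g k m h m' n assume "((g, (k, m)), (h, (m', n))) \<in> composable (prodR H)"
      then have "(g, h) \<in> composable H" and m': "m' = m"
        by (simp_all add: composable_def prodR_def)
      then have "dom GE2 (f g) = cod GE2 (f h)" "f (cmp H g h) = cmp GE2 (f g) (f h)"
        using hom unfolding gpd_hom_def by auto
      then show "dom GE2 (F (g, (k, m))) = cod GE2 (F (h, (m', n))) \<and>
          F (cmp (prodR H) (g, (k, m)) (h, (m', n))) = cmp GE2 (F (g, (k, m))) (F (h, (m', n)))"
        by (simp add: m' F_apply dom_corner cod_corner cmp_corner prodR_def)
    qed
  qed
  have inj_F: "inj_on F (arr (prodR H))"
    using inj by (auto simp: inj_on_def prodR_def F_def corner_eq_iff)
  have "local_homeo (prod_topology (gtop H) (discrete_topology UNIV)) (gtop GE2) F"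
  proof (rule local_homeo_prod_discrete)
    fix d :: "nat \<times> nat"
    obtain m n where "d = (m, n)" by fastforce
    then show "local_homeo (gtop H) (gtop GE2) (\<lambda>h. F (h, d))"
      using local_homeo_compose[OF loc local_homeo_corner] by (simp add: F_apply comp_def)
  qed
  then have "local_homeo (gtop (prodR H)) (gtop GE2) F"
    by (simp add: prodR_def)
  with hom_F inj_F show ?thesis
    unfolding embeds_def by blast
qed

theorem proposition11p14:
  fixes H :: "'a tgpd"
  assumes "ample H" and "effective H"
    and "second_countable (gtop H)" and "Hausdorff_space (gtop H)"
    and "lc_cantor (subtopology (gtop H) (units H))"
  shows "embeds H GE2 \<longleftrightarrow> embeds (prodR H) GE2"
  using embeds_prodR_GE2 embeds_trans[OF embeds_prodR] by blast

end
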